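(* Let $p$ be a prime and $(a,b,c)$ a primitive positive definite form of discriminant $\Delta<0$. Then $$P_{p,0}(a,b,c,q)=\begin{cases}(a,bp,cp^2,q), & p\mid a,\ \left(\frac{\Delta}{p}\right)=0,\\ f_1(q), & p\nmid a,\ \left(\frac{\Delta}{p}\right)=0,\\ (a,b,c,q^{p^2}), & \left(\frac{\Delta}{p}\right)=-1,\\ f_2(q)+(a,pb,cp^2,q)-(a,b,c,q^{p^2}), & p\mid a,\ \left(\frac{\Delta}{p}\right)=1,\\ f_3(q)+f_4(q)-(a,b,c,q^{p^2}), & p\nmid a,\ \left(\frac{\Delta}{p}\right)=1,\end{cases}$$ where $f_i(q):=(ap^2,\,p(b+2ah_i),\,ah_i^2+bh_i+c,\,q)$ and $0\le h_i<p$ are: for $p$ odd, $h_1\equiv -b/(2a)$, $h_2\equiv -c/b$, $h_3\equiv(-b+\sqrt{\Delta})/(2a)$, $h_4\equiv(-b-\sqrt{\Delta})/(2a)\pmod p$ ($\sqrt\Delta$ a fixed square root of $\Delta$ mod $p$); for $p=2$, $h_1\equiv h_2\equiv h_3\equiv c\pmod 2$ and $h_4\not\equiv h_3\pmod 2$.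
   Context: For integers $A,B,C$ with $A>0$, $B^2-4AC<0$, the theta series is the formal power series $(A,B,C,q):=\sum_{(x,y)\in\mathbb Z^2}q^{Ax^2+Bxy+Cy^2}=\sum_{n\ge0}(A,B,C;n)q^n$, where $(A,B,C;n)$ is the number of representations of $n$ by $Ax^2+Bxy+Cy^2$; $(A,B,C,q^{k})$ denotes this series with $q$ replaced by $q^k$. For $m\ge1$ and $0\le r<m$, the projection operator is $P_{m,r}\sum_{n\ge0}a(n)q^n=\sum_{n\ge0}a(mn+r)q^{mn+r}$. $\left(\frac{\Delta}{p}\right)$ is the Kronecker symbol. *)

theory Defs
  imports "HOL-Number_Theory.Number_Theory" "HOL-Computational_Algebra.Formal_Power_Series"
begin

definition reps :: "int \<Rightarrow> int \<Rightarrow> int \<Rightarrow> nat \<Rightarrow> nat" where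
  "reps A B C n = card {(x :: int, y :: int). A * x^2 + B * x * y + C * y^2 = int n}"

text \<open>theta A B C k is the theta series (A,B,C,q^k), i.e. the series
  sum over (x,y) of q^(k (A x^2 + B x y + C y^2)), as a formal power series.\<close>
definition theta :: "int \<Rightarrow> int \<Rightarrow> int \<Rightarrow> nat \<Rightarrow> int fps" where
  "theta A B C k = Abs_fps (\<lambda>n. if k dvd n then int (reps A B C (n div k)) else 0)"

definition proj :: "nat \<Rightarrow> nat \<Rightarrow> int fps \<Rightarrow> int fps" where
  "proj m r f = Abs_fps (\<lambda>n. if n mod m = r then fps_nth f n else 0)"

definition kronecker_prime :: "int \<Rightarrow> nat \<Rightarrow> int" where
  "kronecker_prime D p =
     (if p = 2 then (if even D then 0 else if D mod 8 = 1 \<or> D mod 8 = 7 then 1 else -1)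
      else Legendre D (int p))"

end

theory Submission
  imports Defs
begin

text \<open>The coefficient of q^n in P_{p,0}(a,b,c,q) counts the representations (x,y) of n by
  Q = (a,b,c) with p | Q(x,y), so everything reduces to locating the zeros of Q mod p in Z^2.
  They form pZ^2 when (\<Delta>/p) = -1, one lattice of index p when (\<Delta>/p) = 0, and the union of two
  such lattices, meeting in pZ^2, when (\<Delta>/p) = 1. The lattices of index p containing pZ^2 are
  {x \<equiv> hy} and {y \<equiv> 0}, and which of them occur is read off from a factorisation of 4aQ (of Q
  itself when p | a) mod p. The substitutions x = hy + pz, y = pz and (x,y) = (pu,pv) identify
  the theta series of Q restricted to these lattices with those of f_h, of (a,bp,cp^2) and with
  (a,b,c,q^(p^2)); inclusion-exclusion handles the union.\<close>

definition qf :: "int \<Rightarrow> int \<Rightarrow> int \<Rightarrow> int \<times> int \<Rightarrow> int" where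
  "qf a b c = (\<lambda>(x, y). a*x^2 + b*x*y + c*y^2)"

definition theta_on :: "int \<Rightarrow> int \<Rightarrow> int \<Rightarrow> (int \<times> int) set \<Rightarrow> int fps" where
  "theta_on a b c L = Abs_fps (\<lambda>n. int (card {v \<in> L. qf a b c v = int n}))"

lemma fps_nth_theta_on: "fps_nth (theta_on a b c L) n = int (card {v \<in> L. qf a b c v = int n})"
  by (simp add: theta_on_def)

lemma theta_eq_theta_on_UNIV: "theta a b c 1 = theta_on a b c UNIV"
  by (rule fps_ext) (simp add: theta_def reps_def theta_on_def qf_def case_prod_beta')

lemma proj_0_theta: "proj m 0 (theta a b c 1) = theta_on a b c {v. int m dvd qf a b c v}"
proof (rule fps_ext)
  fix n
  have "{v \<in> {v. int m dvd qf a b c v}. qf a b c v = int n}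
        = (if m dvd n then {v. qf a b c v = int n} else {})"
    by auto
  then show "fps_nth (proj m 0 (theta a b c 1)) n
      = fps_nth (theta_on a b c {v. int m dvd qf a b c v}) n"
    unfolding theta_eq_theta_on_UNIV by (simp add: proj_def fps_nth_theta_on dvd_eq_mod_eq_0)
qed

lemma theta_on_range_inj:
  assumes "inj g" and "k > 0" and "\<And>u. qf a b c (g u) = int k * qf a' b' c' u"
  shows "theta_on a b c (range g) = theta a' b' c' k"
proof (rule fps_ext)
  fix n
  have "{v \<in> range g. qf a b c v = int n} = g ` {u. int k * qf a' b' c' u = int n}"
    using assms(3) by auto
  then have "card {v \<in> range g. qf a b c v = int n} = card {u. int k * qf a' b' c' u = int n}"
    using card_image[OF inj_on_subset[OF assms(1) subset_UNIV]] by simp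
  also have "\<dots> = (if k dvd n then reps a' b' c' (n div k) else 0)"
  proof (cases "k dvd n")
    case True
    then obtain j where "n = k * j" by blast
    then have "{u. int k * qf a' b' c' u = int n} = {u. qf a' b' c' u = int (n div k)}"
      using assms(2) by auto
    then show ?thesis
      using True by (simp add: reps_def qf_def case_prod_beta')
  next
    case False
    then have no_sol: "{u. int k * qf a' b' c' u = int n} = {}"
      by (metis (mono_tags) dvd_triv_left empty_Collect_eq int_dvd_int_iff)
    show ?thesis unfolding no_sol using False by simp
  qed
  finally show "fps_nth (theta_on a b c (range g)) n = fps_nth (theta a' b' c' k) n"
    by (simp add: fps_nth_theta_on theta_def)
qed

definition slope_lattice :: "nat \<Rightarrow> int \<Rightarrow> (int \<times> int) set" where
  "slope_lattice m h = {(x, y). int m dvd x - h*y}"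

definition dvd_snd_lattice :: "nat \<Rightarrow> (int \<times> int) set" where
  "dvd_snd_lattice m = {(x, y). int m dvd y}"

definition dvd_both_lattice :: "nat \<Rightarrow> (int \<times> int) set" where
  "dvd_both_lattice m = {(x, y). int m dvd x \<and> int m dvd y}"

lemma theta_on_slope_lattice:
  assumes "m > 0"
  shows "theta_on a b c (slope_lattice m h)
       = theta (a * int m^2) (int m * (b + 2*a*h)) (a*h^2 + b*h + c) 1"
proof -
  define g where "g = (\<lambda>(z, y). (h*y + int m * z, y :: int))"
  have "slope_lattice m h = range g"
  proof (intro equalityI subsetI)
    fix v assume "v \<in> slope_lattice m h"
    then obtain x y z where "v = (x, y)" "x - h*y = int m * z"
      by (auto simp: slope_lattice_def dvd_def)
    then have "v = g (z, y)" by (simp add: g_def)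
    then show "v \<in> range g" by blast
  qed (auto simp: slope_lattice_def g_def)
  moreover have "inj g" using assms by (auto simp: g_def inj_def)
  moreover have "qf a b c (g u)
      = int 1 * qf (a * int m^2) (int m * (b + 2*a*h)) (a*h^2 + b*h + c) u" for u
    by (simp add: g_def qf_def case_prod_beta' power2_eq_square algebra_simps)
  ultimately show ?thesis by (simp add: theta_on_range_inj)
qed

lemma theta_on_dvd_snd_lattice:
  assumes "m > 0"
  shows "theta_on a b c (dvd_snd_lattice m) = theta a (b * int m) (c * int m^2) 1"
proof -
  define g where "g = (\<lambda>(x :: int, z). (x, int m * z))"
  have "dvd_snd_lattice m = range g"
    by (auto simp: dvd_snd_lattice_def g_def image_iff dvd_def)
  moreover have "inj g" using assms by (auto simp: g_def inj_def)
  moreover have "qf a b c (g u) = int 1 * qf a (b * int m) (c * int m^2) u" for u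
    by (simp add: g_def qf_def case_prod_beta' power2_eq_square algebra_simps)
  ultimately show ?thesis by (simp add: theta_on_range_inj)
qed

lemma theta_on_dvd_both_lattice:
  assumes "m > 0"
  shows "theta_on a b c (dvd_both_lattice m) = theta a b c (m^2)"
proof -
  define g where "g = (\<lambda>(x, y). (int m * x, int m * y))"
  have "dvd_both_lattice m = range g"
    by (auto simp: dvd_both_lattice_def g_def image_iff dvd_def)
  moreover have "inj g" using assms by (auto simp: g_def inj_def)
  moreover have "qf a b c (g u) = int (m^2) * qf a b c u" for u
    by (simp add: g_def qf_def case_prod_beta' power2_eq_square algebra_simps)
  ultimately show ?thesis using assms by (simp add: theta_on_range_inj)
qed

lemma dvd_snd_lattice_Int_slope_lattice:
  "dvd_snd_lattice m \<inter> slope_lattice m h = dvd_both_lattice m"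
  by (auto simp: dvd_snd_lattice_def slope_lattice_def dvd_both_lattice_def)
     (metis dvd_add dvd_mult diff_add_cancel)

lemma slope_lattice_Int:
  assumes "prime p" and "\<not> int p dvd h - h'"
  shows "slope_lattice p h \<inter> slope_lattice p h' = dvd_both_lattice p"
proof (intro equalityI subsetI)
  fix v assume "v \<in> slope_lattice p h \<inter> slope_lattice p h'"
  then obtain x y where v: "v = (x, y)" "int p dvd x - h*y" "int p dvd x - h'*y"
    by (auto simp: slope_lattice_def)
  then have "int p dvd (h - h') * y"
    using dvd_diff[OF v(3) v(2)] by (simp add: algebra_simps)
  then have "int p dvd y"
    using assms by (simp add: prime_dvd_mult_iff)
  then have "int p dvd x" using v(2) by (metis dvd_add dvd_mult diff_add_cancel)
  then show "v \<in> dvd_both_lattice p"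
    using \<open>int p dvd y\<close> v(1) by (simp add: dvd_both_lattice_def)
qed (auto simp: slope_lattice_def dvd_both_lattice_def)

lemma finite_qf_fiber:
  assumes "a > 0" and "b^2 - 4*a*c < 0"
  shows "finite {v. qf a b c v = n}"
proof -
  define N where "N = 4*a*n"
  have bound: "\<bar>x\<bar> \<le> N + \<bar>b\<bar> * N \<and> \<bar>y\<bar> \<le> N" if "qf a b c (x, y) = n" for x y
  proof -
    have sq_bound: "\<bar>t\<bar> \<le> t^2" for t :: int
      using self_le_power[of "\<bar>t\<bar>" 2] by (cases "t = 0") auto
    have "N = (2*a*x + b*y)^2 + (4*a*c - b^2) * y^2"
      unfolding N_def that[symmetric] by (simp add: qf_def power2_eq_square algebra_simps)
    moreover have "y^2 \<le> (4*a*c - b^2) * y^2"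
      using assms(2) mult_right_mono[of 1 "4*a*c - b^2" "y^2"] by simp
    ultimately have "(2*a*x + b*y)^2 \<le> N" "y^2 \<le> N"
      by (smt (verit) zero_le_power2)+
    then have "\<bar>2*a*x + b*y\<bar> \<le> N" "\<bar>y\<bar> \<le> N"
      using sq_bound order.trans by blast+
    moreover have "\<bar>x\<bar> \<le> \<bar>2*a*x\<bar>"
      using assms(1) mult_right_mono[of 1 "2*a" "\<bar>x\<bar>"] by (simp add: abs_mult)
    moreover have "\<bar>b*y\<bar> \<le> \<bar>b\<bar> * N"
      using \<open>\<bar>y\<bar> \<le> N\<close> by (simp add: abs_mult mult_left_mono)
    ultimately show ?thesis by linarith
  qed
  have "{v. qf a b c v = n} \<subseteq> {-(N + \<bar>b\<bar>*N)..N + \<bar>b\<bar>*N} \<times> {-N..N}"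
  proof
    fix v assume "v \<in> {v. qf a b c v = n}"
    then have "qf a b c (fst v, snd v) = n" by simp
    from bound[OF this] show "v \<in> {-(N + \<bar>b\<bar>*N)..N + \<bar>b\<bar>*N} \<times> {-N..N}"
      by (simp add: abs_le_iff mem_Times_iff)
  qed
  then show ?thesis by (rule finite_subset) (simp only: finite_SigmaI finite_atLeastAtMost_int)
qed

lemma theta_on_Un:
  assumes "a > 0" and "b^2 - 4*a*c < 0"
  shows "theta_on a b c (L \<union> M) = theta_on a b c L + theta_on a b c M - theta_on a b c (L \<inter> M)"
proof (rule fps_ext)
  fix n
  let ?S = "\<lambda>L. {v \<in> L. qf a b c v = int n}"
  have fin: "finite (?S L')" for L'
    by (rule finite_subset[OF _ finite_qf_fiber[OF assms, of "int n"]]) blast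
  have "card (?S L) + card (?S M) = card (?S L \<union> ?S M) + card (?S L \<inter> ?S M)"
    by (rule card_Un_Int[OF fin fin])
  moreover have "?S L \<union> ?S M = ?S (L \<union> M)" "?S L \<inter> ?S M = ?S (L \<inter> M)" by blast+
  ultimately have "int (card (?S (L \<union> M))) + int (card (?S (L \<inter> M)))
      = int (card (?S L)) + int (card (?S M))"
    by (simp only: flip: of_nat_add)
  then show "fps_nth (theta_on a b c (L \<union> M)) n
      = fps_nth (theta_on a b c L + theta_on a b c M - theta_on a b c (L \<inter> M)) n"
    unfolding fps_add_nth fps_sub_nth fps_nth_theta_on by linarith
qed

lemma prime_dvd_qf_iff_dvd_snd:
  fixes P :: int
  assumes "prime P" and "P dvd a" and "P dvd b" and "\<not> P dvd c"
  shows "P dvd qf a b c (x, y) \<longleftrightarrow> P dvd y"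
proof -
  have "qf a b c (x, y) = c*y^2 + (a*x^2 + b*x*y)" by (simp add: qf_def)
  moreover have "P dvd a*x^2 + b*x*y" using assms(2,3) by simp
  ultimately show ?thesis
    using assms(1,4) by (simp add: dvd_add_left_iff prime_dvd_mult_iff prime_dvd_power_iff)
qed

lemma prime_dvd_qf_iff_dvd_snd_or_slope:
  fixes P :: int
  assumes "prime P" and "P dvd a" and "\<not> P dvd b^2 - 4*a*c" and "[b*h = -c] (mod P)"
  shows "P dvd qf a b c (x, y) \<longleftrightarrow> P dvd y \<or> P dvd x - h*y"
proof -
  have "\<not> P dvd b" using assms(2,3) by (auto simp: power2_eq_square)
  have "qf a b c (x, y) = b*y*(x - h*y) + (a*x^2 + (b*h + c)*y^2)"
    by (simp add: qf_def power2_eq_square algebra_simps)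
  moreover have "P dvd a*x^2 + (b*h + c)*y^2"
    using assms(2,4) by (simp add: cong_iff_dvd_diff)
  ultimately show ?thesis
    using assms(1) \<open>\<not> P dvd b\<close> by (simp add: dvd_add_left_iff prime_dvd_mult_iff)
qed

lemma odd_prime_not_dvd_4:
  fixes P :: int
  assumes "prime P" and "\<not> P dvd 2"
  shows "\<not> P dvd 4"
  using assms prime_dvd_mult_iff[of P 2 2] by simp

lemma odd_prime_dvd_qf_iff_slope:
  fixes P :: int
  assumes "prime P" and "\<not> P dvd 2" and "\<not> P dvd a"
    and "P dvd b^2 - 4*a*c" and "[2*a*h = -b] (mod P)"
  shows "P dvd qf a b c (x, y) \<longleftrightarrow> P dvd x - h*y"
proof -
  have "4*a*qf a b c (x, y)
      = (2*a*(x - h*y))^2 + ((2*a*h + b)*y*(4*a*x + b*y - 2*a*h*y) - (b^2 - 4*a*c)*y^2)"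
    by (simp add: qf_def power2_eq_square algebra_simps)
  moreover have "P dvd (2*a*h + b)*y*(4*a*x + b*y - 2*a*h*y) - (b^2 - 4*a*c)*y^2"
    using assms(4,5) by (simp add: cong_iff_dvd_diff)
  ultimately have "P dvd 4*a*qf a b c (x, y) \<longleftrightarrow> P dvd (2*a*(x - h*y))^2"
    by (simp add: dvd_add_left_iff)
  then show ?thesis
    using assms(1-3) by (simp add: odd_prime_not_dvd_4 prime_dvd_mult_iff prime_dvd_power_iff)
qed

lemma odd_prime_dvd_qf_iff_two_slopes:
  fixes P :: int
  assumes "prime P" and "\<not> P dvd 2" and "\<not> P dvd a" and "[s^2 = b^2 - 4*a*c] (mod P)"
    and "[2*a*h = -b + s] (mod P)" and "[2*a*h' = -b - s] (mod P)"
  shows "P dvd qf a b c (x, y) \<longleftrightarrow> P dvd x - h*y \<or> P dvd x - h'*y"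
proof -
  \<comment> \<open>\<open>4aQ = (2ax + by)\<^sup>2 - \<Delta>y\<^sup>2 \<equiv> (2ax + (b - s)y)(2ax + (b + s)y)\<close>, and \<open>b \<mp> s \<equiv> -2ah, -2ah'\<close>\<close>
  define u where "u = 2*a*h - (-b + s)"
  define u' where "u' = 2*a*h' - (-b - s)"
  have "4*a*qf a b c (x, y) = (2*a*(x - h*y)) * (2*a*(x - h'*y))
      + ((s^2 - (b^2 - 4*a*c))*y^2 + u'*y*(2*a*x + b*y - s*y) + u*y*(2*a*x + b*y + s*y) - u*u'*y^2)"
    by (simp add: u_def u'_def qf_def power2_eq_square algebra_simps)
  moreover have "P dvd (s^2 - (b^2 - 4*a*c))*y^2 + u'*y*(2*a*x + b*y - s*y)
      + u*y*(2*a*x + b*y + s*y) - u*u'*y^2"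
    using assms(4-6) by (simp add: u_def u'_def cong_iff_dvd_diff)
  ultimately have "P dvd 4*a*qf a b c (x, y) \<longleftrightarrow> P dvd (2*a*(x - h*y)) * (2*a*(x - h'*y))"
    by (simp add: dvd_add_left_iff)
  then show ?thesis
    using assms(1-3) by (simp add: odd_prime_not_dvd_4 prime_dvd_mult_iff)
qed

lemma odd_prime_not_dvd_slope_diff:
  fixes P :: int
  assumes "prime P" and "\<not> P dvd 2" and "\<not> P dvd b^2 - 4*a*c" and "[s^2 = b^2 - 4*a*c] (mod P)"
    and "[2*a*h = -b + s] (mod P)" and "[2*a*h' = -b - s] (mod P)"
  shows "\<not> P dvd h - h'"
proof
  assume "P dvd h - h'"
  have "[2*a*h - 2*a*h' = 2*s] (mod P)"
    using cong_diff[OF assms(5,6)] by simp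
  moreover have "[2*a*h - 2*a*h' = 0] (mod P)"
    using \<open>P dvd h - h'\<close> by (simp add: cong_0_iff flip: right_diff_distrib)
  ultimately have "[2*s = 0] (mod P)" by (metis cong_sym cong_trans)
  then have "P dvd 2*s" by (simp add: cong_0_iff)
  then have "P dvd s^2" using assms(1,2) by (simp add: prime_dvd_mult_iff power2_eq_square)
  then show False using assms(3,4) by (simp add: cong_dvd_iff)
qed

lemma odd_prime_dvd_qf_iff_dvd_both:
  fixes P :: int
  assumes "prime P" and "\<not> P dvd 2" and "\<not> QuadRes P (b^2 - 4*a*c)"
  shows "P dvd qf a b c (x, y) \<longleftrightarrow> P dvd x \<and> P dvd y"
proof
  define D where "D = b^2 - 4*a*c"
  have "\<not> P dvd a"
  proof
    assume "P dvd a"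
    then have "[b^2 = D] (mod P)" by (simp add: D_def cong_iff_dvd_diff)
    then show False using assms(3) unfolding QuadRes_def D_def by blast
  qed
  assume "P dvd qf a b c (x, y)"
  moreover have "4*a*qf a b c (x, y) = (2*a*x + b*y)^2 - D*y^2"
    by (simp add: D_def qf_def power2_eq_square algebra_simps)
  ultimately have sq: "[(2*a*x + b*y)^2 = D*y^2] (mod P)"
    by (metis cong_iff_dvd_diff dvd_mult)
  have "P dvd y"
  proof (rule ccontr)
    assume "\<not> P dvd y"
    then obtain y' where y': "[y*y' = 1] (mod P)"
      using cong_solve_coprime_int prime_imp_coprime[OF assms(1)] coprime_commute by blast
    have "[((2*a*x + b*y)*y')^2 = D*(y*y')^2] (mod P)"
      using cong_mult[OF sq cong_refl[of "y'^2"]] by (simp add: power_mult_distrib ac_simps)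
    also have "[D*(y*y')^2 = D] (mod P)"
      using cong_mult[OF cong_refl[of D] cong_pow[OF y', of 2]] by simp
    finally show False using assms(3) unfolding QuadRes_def D_def by blast
  qed
  then have "P dvd (2*a*x + b*y)^2"
    using sq by (simp add: cong_dvd_iff power2_eq_square)
  then have "P dvd 2*a*x + b*y"
    using assms(1) by (simp add: prime_dvd_power_iff)
  then have "P dvd (2*a*x + b*y) - b*y"
    using \<open>P dvd y\<close> by (intro dvd_diff) auto
  then have "P dvd x"
    using assms(1,2) \<open>\<not> P dvd a\<close> by (simp add: prime_dvd_mult_iff)
  then show "P dvd x \<and> P dvd y" using \<open>P dvd y\<close> by simp
qed (auto simp: qf_def power2_eq_square)

lemma even_qf_iff_slope:
  assumes "odd a" and "even b" and "even (h - c)"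
  shows "even (qf a b c (x, y)) \<longleftrightarrow> even (x - h*y)"
  using assms by (simp add: qf_def)

lemma even_qf_iff_dvd_both:
  assumes "odd b" and "odd (a*c)"
  shows "even (qf a b c (x, y)) \<longleftrightarrow> even x \<and> even y"
  using assms by (cases "even x"; cases "even y"; simp add: qf_def)

lemma even_qf_iff_two_slopes:
  assumes "odd a" and "odd b" and "even c" and "even (h - c)" and "odd (h' - h)"
  shows "even (qf a b c (x, y)) \<longleftrightarrow> even (x - h*y) \<or> even (x - h'*y)"
  using assms by (cases "even x"; cases "even y"; cases "even h"; simp add: qf_def)

lemma kronecker_prime_eq_0_iff:
  assumes "prime p"
  shows "kronecker_prime D p = 0 \<longleftrightarrow> int p dvd D"
  using assms by (auto simp: kronecker_prime_def Legendre_def cong_0_iff)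

lemma kronecker_prime_eq_minus_1_imp_not_QuadRes:
  assumes "p \<noteq> 2" and "kronecker_prime D p = -1"
  shows "\<not> QuadRes (int p) D"
  using assms by (simp add: kronecker_prime_def Legendre_def split: if_splits)

lemma kronecker_prime_2_discriminant:
  "kronecker_prime (b^2 - 4*a*c) 2 = (if even b then 0 else if even (a*c) then 1 else -1)"
proof (cases "even b")
  case False
  then obtain k where "b = 2*k + 1" by (blast elim: oddE)
  moreover obtain j where "k*(k + 1) = 2*j" by (metis evenE even_mult_iff odd_one even_add)
  ultimately have D: "b^2 - 4*a*c = 8*j + 1 - 4*(a*c)"
    by (simp add: power2_eq_square algebra_simps)
  have "(8*j + 1 - 4*t) mod 8 = 1 \<or> (8*j + 1 - 4*t) mod 8 = 7 \<longleftrightarrow> even t" for t :: int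
    by presburger
  then have "(b^2 - 4*a*c) mod 8 = 1 \<or> (b^2 - 4*a*c) mod 8 = 7 \<longleftrightarrow> even (a*c)"
    unfolding D .
  then show ?thesis
    using False unfolding kronecker_prime_def by simp
qed (simp add: kronecker_prime_def)

lemma prime_not_dvd_2:
  assumes "prime p" and "p \<noteq> 2"
  shows "\<not> int p dvd 2"
proof
  assume "int p dvd 2"
  then have "p dvd 2" by (metis of_nat_dvd_iff of_nat_numeral)
  then show False using assms primes_dvd_imp_eq[of p 2] by simp
qed

lemma dvd_qf_eq_dvd_snd_lattice:
  assumes "prime p" and "int p dvd a" and "kronecker_prime (b^2 - 4*a*c) p = 0"
    and "gcd (gcd a b) c = 1"
  shows "{v. int p dvd qf a b c v} = dvd_snd_lattice p"
proof -
  have "prime (int p)" using assms(1) by simp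
  have "int p dvd (b^2 - 4*a*c) + 4*a*c"
    using assms(1-3) by (intro dvd_add) (simp_all add: kronecker_prime_eq_0_iff)
  then have "int p dvd b"
    using \<open>prime (int p)\<close> by (simp add: prime_dvd_power_iff)
  moreover have "\<not> int p dvd c"
  proof
    assume "int p dvd c"
    with assms(2) \<open>int p dvd b\<close> have "int p dvd gcd (gcd a b) c" by simp
    with assms(4) \<open>prime (int p)\<close> show False by (simp add: not_prime_unit)
  qed
  ultimately show ?thesis
    using prime_dvd_qf_iff_dvd_snd[OF \<open>prime (int p)\<close> assms(2)]
    by (auto simp: dvd_snd_lattice_def)
qed

lemma dvd_qf_eq_slope_lattice:
  assumes "prime p" and "\<not> int p dvd a" and "kronecker_prime (b^2 - 4*a*c) p = 0"
    and "if p = 2 then [h = c] (mod 2) else [2*a*h = -b] (mod int p)"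
  shows "{v. int p dvd qf a b c v} = slope_lattice p h"
proof -
  have "int p dvd qf a b c (x, y) \<longleftrightarrow> int p dvd x - h*y" for x y
  proof (cases "p = 2")
    case True
    then have "even b" using assms(3) by (simp add: kronecker_prime_2_discriminant split: if_splits)
    moreover have "odd a" "even (h - c)"
      using assms(2,4) True by (simp_all add: cong_iff_dvd_diff)
    ultimately show ?thesis using True by (simp add: even_qf_iff_slope)
  next
    case False
    then show ?thesis
      using assms odd_prime_dvd_qf_iff_slope[of "int p" a b c h]
      by (simp add: prime_not_dvd_2 kronecker_prime_eq_0_iff)
  qed
  then show ?thesis by (auto simp: slope_lattice_def)
qed

lemma dvd_qf_eq_dvd_both_lattice:
  assumes "prime p" and "kronecker_prime (b^2 - 4*a*c) p = -1"
  shows "{v. int p dvd qf a b c v} = dvd_both_lattice p"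
proof -
  have "int p dvd qf a b c (x, y) \<longleftrightarrow> int p dvd x \<and> int p dvd y" for x y
  proof (cases "p = 2")
    case True
    then have "odd b" "odd (a*c)"
      using assms(2) by (simp_all add: kronecker_prime_2_discriminant split: if_splits)
    then show ?thesis using True by (simp add: even_qf_iff_dvd_both)
  next
    case False
    then show ?thesis
      using assms odd_prime_dvd_qf_iff_dvd_both[of "int p" b a c]
      by (simp add: prime_not_dvd_2 kronecker_prime_eq_minus_1_imp_not_QuadRes)
  qed
  then show ?thesis by (auto simp: dvd_both_lattice_def)
qed

lemma dvd_qf_eq_dvd_snd_Un_slope_lattice:
  assumes "prime p" and "int p dvd a" and "kronecker_prime (b^2 - 4*a*c) p = 1"
    and "if p = 2 then [h = c] (mod 2) else [b*h = -c] (mod int p)"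
  shows "{v. int p dvd qf a b c v} = dvd_snd_lattice p \<union> slope_lattice p h"
proof -
  have "[b*h = -c] (mod int p)"
  proof (cases "p = 2")
    case True
    then have "odd b" using assms(3) by (simp add: kronecker_prime_2_discriminant split: if_splits)
    moreover have "b*h + c = b*(h - c) + (b + 1)*c" by (simp add: algebra_simps)
    ultimately show ?thesis
      using assms(4) True by (simp add: cong_iff_dvd_diff)
  qed (use assms(4) in simp)
  moreover have "\<not> int p dvd b^2 - 4*a*c"
    using assms(1,3) by (simp add: kronecker_prime_eq_0_iff[symmetric])
  ultimately have "int p dvd qf a b c (x, y) \<longleftrightarrow> int p dvd y \<or> int p dvd x - h*y" for x y
    using assms(1,2) prime_dvd_qf_iff_dvd_snd_or_slope[of "int p"] by simp
  then show ?thesis by (auto simp: dvd_snd_lattice_def slope_lattice_def)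
qed

lemma dvd_qf_eq_two_slope_lattices:
  assumes "prime p" and "\<not> int p dvd a" and "kronecker_prime (b^2 - 4*a*c) p = 1"
    and "[s^2 = b^2 - 4*a*c] (mod int p)"
    and "if p = 2 then [h = c] (mod 2) \<and> \<not> [h' = h] (mod 2)
         else [2*a*h = -b + s] (mod int p) \<and> [2*a*h' = -b - s] (mod int p)"
  shows "{v. int p dvd qf a b c v} = slope_lattice p h \<union> slope_lattice p h'"
    and "slope_lattice p h \<inter> slope_lattice p h' = dvd_both_lattice p"
proof -
  have "(int p dvd qf a b c (x, y) \<longleftrightarrow> int p dvd x - h*y \<or> int p dvd x - h'*y)
      \<and> \<not> int p dvd h - h'" for x y
  proof (cases "p = 2")
    case True
    then have "odd b" "even (a*c)"
      using assms(3) by (simp_all add: kronecker_prime_2_discriminant split: if_splits)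
    moreover have "odd a" "even (h - c)" "odd (h' - h)"
      using assms(2,5) True by (simp_all add: cong_iff_dvd_diff)
    ultimately show ?thesis
      using True by (simp add: even_qf_iff_two_slopes even_diff_iff)
  next
    case False
    moreover have "\<not> int p dvd b^2 - 4*a*c"
      using assms(1,3) by (simp add: kronecker_prime_eq_0_iff[symmetric])
    ultimately show ?thesis
      using assms odd_prime_dvd_qf_iff_two_slopes[of "int p" a s b c h h']
        odd_prime_not_dvd_slope_diff[of "int p" b a c s h h']
      by (simp add: prime_not_dvd_2)
  qed
  then show "{v. int p dvd qf a b c v} = slope_lattice p h \<union> slope_lattice p h'"
    and "slope_lattice p h \<inter> slope_lattice p h' = dvd_both_lattice p"
    using assms(1) slope_lattice_Int by (auto simp: slope_lattice_def)
qed

theorem lemma4p2: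
  fixes p :: nat and a b c :: int
  assumes "prime p" and "a > 0" and "b^2 - 4*a*c < 0" and "gcd (gcd a b) c = 1"
  defines "D \<equiv> b^2 - 4*a*c"
    and "f \<equiv> (\<lambda>h::int. theta (a * int p^2) (int p * (b + 2*a*h)) (a*h^2 + b*h + c) 1)"
  shows
   "(int p dvd a \<and> kronecker_prime D p = 0 \<longrightarrow>
       proj p 0 (theta a b c 1) = theta a (b * int p) (c * int p^2) 1)
  \<and> (\<not> int p dvd a \<and> kronecker_prime D p = 0 \<longrightarrow>
       (\<forall>h1. 0 \<le> h1 \<and> h1 < int p \<and>
          (if p = 2 then [h1 = c] (mod 2) else [2*a*h1 = -b] (mod int p)) \<longrightarrow>
          proj p 0 (theta a b c 1) = f h1))
  \<and> (kronecker_prime D p = -1 \<longrightarrow>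
       proj p 0 (theta a b c 1) = theta a b c (p^2))
  \<and> (int p dvd a \<and> kronecker_prime D p = 1 \<longrightarrow>
       (\<forall>h2. 0 \<le> h2 \<and> h2 < int p \<and>
          (if p = 2 then [h2 = c] (mod 2) else [b*h2 = -c] (mod int p)) \<longrightarrow>
          proj p 0 (theta a b c 1) =
            f h2 + theta a (int p * b) (c * int p^2) 1 - theta a b c (p^2)))
  \<and> (\<not> int p dvd a \<and> kronecker_prime D p = 1 \<longrightarrow>
       (\<forall>s h3 h4. [s^2 = D] (mod int p) \<and> 0 \<le> h3 \<and> h3 < int p \<and> 0 \<le> h4 \<and> h4 < int p \<and>
          (if p = 2 then [h3 = c] (mod 2) \<and> \<not> [h4 = h3] (mod 2)
           else [2*a*h3 = -b + s] (mod int p) \<and> [2*a*h4 = -b - s] (mod int p)) \<longrightarrow>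
          proj p 0 (theta a b c 1) = f h3 + f h4 - theta a b c (p^2)))"
proof -
  have "p > 0" using assms(1) prime_gt_0_nat by blast
  have proj: "proj p 0 (theta a b c 1) = theta_on a b c {v. int p dvd qf a b c v}"
    by (rule proj_0_theta)
  have slope: "theta_on a b c (slope_lattice p h) = f h" for h
    using \<open>p > 0\<close> by (simp add: f_def theta_on_slope_lattice)
  have snd: "theta_on a b c (dvd_snd_lattice p) = theta a (b * int p) (c * int p^2) 1"
    using \<open>p > 0\<close> by (rule theta_on_dvd_snd_lattice)
  have both: "theta_on a b c (dvd_both_lattice p) = theta a b c (p^2)"
    using \<open>p > 0\<close> by (rule theta_on_dvd_both_lattice)
  note Un = theta_on_Un[OF assms(2,3)]
  have "proj p 0 (theta a b c 1) = theta a (b * int p) (c * int p^2) 1"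
    if "int p dvd a" "kronecker_prime D p = 0"
    unfolding proj dvd_qf_eq_dvd_snd_lattice[OF assms(1) that[unfolded D_def] assms(4)]
    by (rule snd)
  moreover have "proj p 0 (theta a b c 1) = f h"
    if "\<not> int p dvd a" "kronecker_prime D p = 0"
      "if p = 2 then [h = c] (mod 2) else [2*a*h = -b] (mod int p)" for h
    unfolding proj dvd_qf_eq_slope_lattice[OF assms(1) that[unfolded D_def]] by (rule slope)
  moreover have "proj p 0 (theta a b c 1) = theta a b c (p^2)"
    if "kronecker_prime D p = -1"
    unfolding proj dvd_qf_eq_dvd_both_lattice[OF assms(1) that[unfolded D_def]] by (rule both)
  moreover have
    "proj p 0 (theta a b c 1) = f h + theta a (int p * b) (c * int p^2) 1 - theta a b c (p^2)"
    if "int p dvd a" "kronecker_prime D p = 1"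
      "if p = 2 then [h = c] (mod 2) else [b*h = -c] (mod int p)" for h
    unfolding proj dvd_qf_eq_dvd_snd_Un_slope_lattice[OF assms(1) that[unfolded D_def]] Un
      dvd_snd_lattice_Int_slope_lattice snd slope both
    by (simp add: mult.commute)
  moreover have "proj p 0 (theta a b c 1) = f h + f h' - theta a b c (p^2)"
    if "\<not> int p dvd a" "kronecker_prime D p = 1" "[s^2 = D] (mod int p)"
      "if p = 2 then [h = c] (mod 2) \<and> \<not> [h' = h] (mod 2)
       else [2*a*h = -b + s] (mod int p) \<and> [2*a*h' = -b - s] (mod int p)" for s h h'
    unfolding proj dvd_qf_eq_two_slope_lattices[OF assms(1) that[unfolded D_def]] Un slope both ..
  ultimately show ?thesis by blast
qed

end
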